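(* Let $C\in\mathbb{R}^{n\times n}$ be symmetric and let $(Z,k)$ be an optimal solution of $$\max_{Z,k}\ \langle C,Z\rangle-\tfrac12k^Tk\quad\text{s.t. } Z_{ii}=k_i\ (i=1,\dots,n),\ Z\succeq0.$$ Define $w\in\mathbb{R}^n$ by $w_i=Z_{ii}$. Then $w$ is an optimal solution of $$\min_{w\in\mathbb{R}^n}\ \tfrac12w^Tw\quad\text{s.t. } \operatorname{Diag}(w)\succeq C.$$
   Context: $\operatorname{Diag}(w)$ is the diagonal matrix with diagonal $w$; $\langle C,Z\rangle=\operatorname{tr}(CZ)$. *)

theory Defs
  imports "HOL-Analysis.Analysis"
begin

definition symmetric_mat :: "real^'n^'n \<Rightarrow> bool" where
  "symmetric_mat A \<longleftrightarrow> transpose A = A"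

definition psd :: "real^'n^'n \<Rightarrow> bool" where
  "psd A \<longleftrightarrow> symmetric_mat A \<and> (\<forall>x. x \<bullet> (A *v x) \<ge> 0)"

definition Diag :: "real^'n \<Rightarrow> real^'n^'n" where
  "Diag w = (\<chi> i j. if i = j then w $ i else 0)"

definition trace_ip :: "real^'n^'n \<Rightarrow> real^'n^'n \<Rightarrow> real" where
  "trace_ip C Z = trace (C ** Z)"

definition primal_feasible :: "real^'n^'n \<Rightarrow> real^'n \<Rightarrow> bool" where
  "primal_feasible Z k \<longleftrightarrow> (\<forall>i. Z $ i $ i = k $ i) \<and> psd Z"

definition primal_obj :: "real^'n^'n \<Rightarrow> real^'n^'n \<Rightarrow> real^'n \<Rightarrow> real" where
  "primal_obj C Z k = trace_ip C Z - (1/2) * (k \<bullet> k)"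

definition primal_optimal :: "real^'n^'n \<Rightarrow> real^'n^'n \<Rightarrow> real^'n \<Rightarrow> bool" where
  "primal_optimal C Z k \<longleftrightarrow> primal_feasible Z k \<and>
     (\<forall>Z' k'. primal_feasible Z' k' \<longrightarrow> primal_obj C Z' k' \<le> primal_obj C Z k)"

definition dual_feasible :: "real^'n^'n \<Rightarrow> real^'n \<Rightarrow> bool" where
  "dual_feasible C w \<longleftrightarrow> psd (Diag w - C)"

definition dual_optimal :: "real^'n^'n \<Rightarrow> real^'n \<Rightarrow> bool" where
  "dual_optimal C w \<longleftrightarrow> dual_feasible C w \<and>
     (\<forall>w'. dual_feasible C w' \<longrightarrow> (1/2) * (w \<bullet> w) \<le> (1/2) * (w' \<bullet> w'))"

end

theory Submission
  imports Defs
begin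

text \<open>The primal objective is concave, so optimality of \<open>(Z, k)\<close> gives a first-order condition
  along every feasible direction. Adding \<open>t x x\<^sup>T\<close> to \<open>Z\<close> (and \<open>t x\<^sub>i\<^sup>2\<close> to \<open>k\<^sub>i\<close>) yields
  \<open>x\<^sup>T C x \<le> \<Sum>\<^sub>i k\<^sub>i x\<^sub>i\<^sup>2\<close>, i.e. \<open>Diag k \<succeq> C\<close>; shrinking \<open>(Z, k)\<close> towards \<open>0\<close> yields
  \<open>k\<^sup>T k \<le> \<langle>C, Z\<rangle>\<close>. Since \<open>tr (A B) \<ge> 0\<close> for positive semidefinite \<open>A, B\<close>, every dual
  feasible \<open>w\<close> satisfies \<open>\<langle>C, Z\<rangle> \<le> w\<^sup>T k\<close>, hence \<open>k\<^sup>T k \<le> w\<^sup>T k\<close> and so \<open>|k| \<le> |w|\<close>.\<close>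

lemma quadratic_nonneg_imp_discriminant_nonpos:
  fixes a b c :: real
  assumes nonneg: "\<And>t. 0 \<le> a + 2 * t * b + t^2 * c" and "0 \<le> c"
  shows "b^2 \<le> a * c"
proof (cases "c = 0")
  case True
  have "b = 0"
  proof (rule ccontr)
    assume "b \<noteq> 0"
    then have "a + 2 * (-(a + 1) / (2 * b)) * b = -1" by (simp add: field_simps)
    then show False using nonneg[of "-(a + 1) / (2 * b)"] True by simp
  qed
  with True show ?thesis by simp
next
  case False
  with \<open>0 \<le> c\<close> have "0 < c" by simp
  have "a + 2 * (-b/c) * b + (-b/c)^2 * c = a - b^2 / c"
    using \<open>0 < c\<close> by (simp add: field_simps power2_eq_square)
  with nonneg[of "-b/c"] have "b^2 / c \<le> a" by simp
  with \<open>0 < c\<close> show ?thesis by (simp add: field_simps)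
qed

lemma nonpos_if_le_quadratic_near_0:
  fixes c d e :: real
  assumes "0 < e" and le: "\<And>t. 0 < t \<Longrightarrow> t \<le> e \<Longrightarrow> t * c \<le> t^2 * d"
  shows "c \<le> 0"
proof (rule ccontr)
  assume "\<not> c \<le> 0"
  define t where "t = min e (c / (2 * (\<bar>d\<bar> + 1)))"
  have "0 < t" using \<open>0 < e\<close> \<open>\<not> c \<le> 0\<close> by (simp add: t_def)
  have "c \<le> t * d" using le[of t] \<open>0 < t\<close> by (simp add: t_def power2_eq_square)
  also have "\<dots> \<le> t * (\<bar>d\<bar> + 1)" using \<open>0 < t\<close> by simp
  also have "\<dots> \<le> c / 2"
  proof -
    have "t \<le> c / (2 * (\<bar>d\<bar> + 1))" by (simp add: t_def)
    then show ?thesis by (simp add: field_simps)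
  qed
  finally show False using \<open>\<not> c \<le> 0\<close> by simp
qed

definition outer_prod :: "real^'n \<Rightarrow> real^'m \<Rightarrow> real^'m^'n" where
  "outer_prod x y = (\<chi> i j. x$i * y$j)"

lemma inner_matrix_vector_eq_sum:
  fixes A :: "real^'m^'n"
  shows "x \<bullet> (A *v y) = (\<Sum>i\<in>UNIV. \<Sum>j\<in>UNIV. x$i * A$i$j * y$j)"
  by (simp add: inner_vec_def matrix_vector_mult_def sum_distrib_left mult.assoc)

lemma trace_matrix_mult_eq_sum:
  fixes A :: "real^'m^'n" and B :: "real^'n^'m"
  shows "trace (A ** B) = (\<Sum>i\<in>UNIV. \<Sum>j\<in>UNIV. A$i$j * B$j$i)"
  by (simp add: trace_def matrix_matrix_mult_def)

lemma trace_mult_add_scaleR: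
  fixes A B D :: "real^'n^'n"
  shows "trace (A ** (B + t *\<^sub>R D)) = trace (A ** B) + t * trace (A ** D)"
  by (simp add: trace_matrix_mult_eq_sum algebra_simps sum.distrib sum_distrib_left)

lemma trace_diff_mult:
  fixes A B D :: "real^'n^'n"
  shows "trace ((A - B) ** D) = trace (A ** D) - trace (B ** D)"
  by (simp add: trace_matrix_mult_eq_sum algebra_simps sum_subtractf)

lemma trace_ip_add_scaleR: "trace_ip C (Z + t *\<^sub>R M) = trace_ip C Z + t * trace_ip C M"
  by (simp add: trace_ip_def trace_mult_add_scaleR)

lemma trace_mult_outer_prod:
  fixes A :: "real^'n^'n"
  shows "trace (A ** outer_prod x y) = y \<bullet> (A *v x)"
  by (simp add: trace_matrix_mult_eq_sum inner_matrix_vector_eq_sum outer_prod_def mult_ac)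

lemma trace_Diag_mult: "trace (Diag w ** Z) = w \<bullet> (\<chi> i. Z$i$i)"
proof -
  have "(\<Sum>j\<in>UNIV. Diag w $ i $ j * Z $ j $ i) = w$i * Z$i$i" for i
    by (simp add: Diag_def if_distrib[of "\<lambda>a. a * _"] cong: if_cong)
  then show ?thesis by (simp add: trace_matrix_mult_eq_sum inner_vec_def)
qed

lemma inner_outer_prod_mult: "z \<bullet> (outer_prod x y *v z) = (x \<bullet> z) * (y \<bullet> z)"
  unfolding inner_matrix_vector_eq_sum by (simp add: outer_prod_def inner_vec_def sum_product mult_ac)

lemma inner_axis_matrix_axis: "axis i 1 \<bullet> (A *v axis j 1) = A$i$j"
  by (simp add: inner_axis' matrix_vector_mult_basis column_def)

lemma symmetric_mat_iff: "symmetric_mat A \<longleftrightarrow> (\<forall>i j. A$i$j = A$j$i)"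
  unfolding symmetric_mat_def transpose_def vec_eq_iff by auto

lemma symmetric_mat_inner_commute:
  assumes "symmetric_mat A"
  shows "x \<bullet> (A *v y) = y \<bullet> (A *v x)"
proof -
  have "x \<bullet> (A *v y) = (\<Sum>j\<in>UNIV. \<Sum>i\<in>UNIV. x$i * A$i$j * y$j)"
    unfolding inner_matrix_vector_eq_sum by (rule sum.swap)
  also have "\<dots> = y \<bullet> (A *v x)"
    using assms by (simp add: inner_matrix_vector_eq_sum symmetric_mat_iff mult_ac)
  finally show ?thesis .
qed

lemma psd_add: "psd A \<Longrightarrow> psd B \<Longrightarrow> psd (A + B)"
  by (simp add: psd_def symmetric_mat_iff matrix_vector_mult_add_rdistrib inner_add_right)

lemma psd_scaleR: "0 \<le> c \<Longrightarrow> psd A \<Longrightarrow> psd (c *\<^sub>R A)"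
  by (simp add: psd_def symmetric_mat_iff flip: scaleR_matrix_vector_assoc)

lemma psd_outer_prod: "psd (outer_prod x x)"
  unfolding psd_def inner_outer_prod_mult by (simp add: symmetric_mat_iff outer_prod_def mult.commute)

lemma psd_diag_nonneg: "psd A \<Longrightarrow> 0 \<le> A$i$i"
  using inner_axis_matrix_axis[of i A i] by (metis psd_def)

lemma psd_Cauchy_Schwarz:
  assumes "psd A"
  shows "(x \<bullet> (A *v y))^2 \<le> (x \<bullet> (A *v x)) * (y \<bullet> (A *v y))"
proof (rule quadratic_nonneg_imp_discriminant_nonpos)
  have sym: "symmetric_mat A" using assms psd_def by blast
  fix t
  have "(x + t *\<^sub>R y) \<bullet> (A *v (x + t *\<^sub>R y)) =
      x \<bullet> (A *v x) + 2 * t * (x \<bullet> (A *v y)) + t^2 * (y \<bullet> (A *v y))"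
    using symmetric_mat_inner_commute[OF sym, of x y]
    by (simp add: algebra_simps inner_add_left inner_add_right power2_eq_square)
  then show "0 \<le> x \<bullet> (A *v x) + 2 * t * (x \<bullet> (A *v y)) + t^2 * (y \<bullet> (A *v y))"
    using assms psd_def by metis
  show "0 \<le> y \<bullet> (A *v y)" using assms psd_def by blast
qed

lemma psd_zero_diag_imp_zero:
  assumes "psd A" and "A$i$i = 0"
  shows "A$i$j = 0"
  using psd_Cauchy_Schwarz[OF assms(1), of "axis i 1" "axis j 1"] assms(2)
  by (simp add: inner_axis_matrix_axis)

lemma psd_diff_outer_prod_column:
  assumes "psd A" and "0 < A$i$i"
  shows "psd (A - (1 / A$i$i) *\<^sub>R outer_prod (column i A) (column i A))"
    (is "psd ?A'")
proof -
  have "symmetric_mat ?A'"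
    using assms(1) by (simp add: psd_def symmetric_mat_iff outer_prod_def column_def mult.commute)
  moreover have "0 \<le> x \<bullet> (?A' *v x)" for x
  proof -
    have "(x \<bullet> column i A)^2 \<le> (x \<bullet> (A *v x)) * A$i$i"
      using psd_Cauchy_Schwarz[OF assms(1), of x "axis i 1"]
      by (simp add: matrix_vector_mult_basis inner_axis' column_def)
    with assms(2) have "(x \<bullet> column i A)^2 / A$i$i \<le> x \<bullet> (A *v x)"
      by (simp add: field_simps)
    then show ?thesis
      by (simp add: matrix_vector_mult_diff_rdistrib inner_diff_right inner_outer_prod_mult
          power2_eq_square inner_commute flip: scaleR_matrix_vector_assoc)
  qed
  ultimately show ?thesis unfolding psd_def by blast
qed

text \<open>Induction over a set containing the indices of the nonzero diagonal entries of \<open>B\<close>: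
  each step splits off the rank-one term \<open>c c\<^sup>T / B\<^sub>i\<^sub>i\<close> with \<open>c\<close> the \<open>i\<close>-th column,
  which contributes \<open>c\<^sup>T A c / B\<^sub>i\<^sub>i \<ge> 0\<close> to the trace, and leaves a positive semidefinite
  remainder whose \<open>i\<close>-th row vanishes.\<close>

lemma trace_mult_psd_nonneg:
  fixes A B :: "real^'n^'n"
  assumes "psd A" and "psd B"
  shows "0 \<le> trace (A ** B)"
proof -
  have "0 \<le> trace (A ** B)" if "finite S" "psd B" "\<forall>j. j \<notin> S \<longrightarrow> B$j$j = 0" for S B
    using that
  proof (induction S arbitrary: B rule: finite_induct)
    case empty
    then have "B$i$j = 0" for i j using psd_zero_diag_imp_zero by blast
    then have "B = 0" by (simp add: vec_eq_iff)
    then show ?case by (simp add: trace_def)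
  next
    case (insert i S)
    show ?case
    proof (cases "B$i$i = 0")
      case True
      with insert.prems(2) have "\<forall>j. j \<notin> S \<longrightarrow> B$j$j = 0" by auto
      from insert.IH[OF insert.prems(1) this] show ?thesis .
    next
      case False
      with psd_diag_nonneg[OF insert.prems(1)] have pos: "0 < B$i$i"
        by (simp add: order_less_le)
      define c where "c = column i B"
      define B' where "B' = B - (1 / B$i$i) *\<^sub>R outer_prod c c"
      have "psd B'" unfolding B'_def c_def using insert.prems(1) pos by (rule psd_diff_outer_prod_column)
      moreover have "\<forall>j. j \<notin> S \<longrightarrow> B'$j$j = 0"
      proof (intro allI impI)
        fix j assume "j \<notin> S"
        show "B'$j$j = 0"
        proof (cases "j = i")
          case True
          with pos show ?thesis by (simp add: B'_def c_def outer_prod_def column_def)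
        next
          case False
          with insert.prems(2) \<open>j \<notin> S\<close> have "B$j$j = 0" by simp
          moreover from psd_zero_diag_imp_zero[OF insert.prems(1) this] have "B$j$i = 0" .
          ultimately show ?thesis by (simp add: B'_def c_def outer_prod_def column_def)
        qed
      qed
      ultimately have "0 \<le> trace (A ** B')" by (rule insert.IH)
      have "trace (A ** B) = trace (A ** (B' + (1 / B$i$i) *\<^sub>R outer_prod c c))"
        by (simp add: B'_def)
      also have "\<dots> = trace (A ** B') + (1 / B$i$i) * (c \<bullet> (A *v c))"
        by (simp only: trace_mult_add_scaleR trace_mult_outer_prod)
      finally have "trace (A ** B) = trace (A ** B') + (1 / B$i$i) * (c \<bullet> (A *v c))" .
      moreover have "0 \<le> c \<bullet> (A *v c)" using assms(1) psd_def by blast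
      ultimately show ?thesis using pos \<open>0 \<le> trace (A ** B')\<close> by simp
    qed
  qed
  from this[of UNIV B] assms(2) show ?thesis by simp
qed

lemma primal_optimal_feasible_direction:
  assumes opt: "primal_optimal C Z k" and "0 < e"
    and feasible: "\<And>t. 0 < t \<Longrightarrow> t \<le> e \<Longrightarrow> primal_feasible (Z + t *\<^sub>R M) (k + t *\<^sub>R m)"
  shows "trace_ip C M \<le> k \<bullet> m"
proof -
  have "t * (trace_ip C M - k \<bullet> m) \<le> t^2 * (m \<bullet> m / 2)" if "0 < t" "t \<le> e" for t
  proof -
    have "primal_obj C (Z + t *\<^sub>R M) (k + t *\<^sub>R m) \<le> primal_obj C Z k"
      using opt feasible[OF that] unfolding primal_optimal_def by blast
    then show ?thesis
      by (simp add: primal_obj_def trace_ip_add_scaleR inner_add_left inner_add_right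
          inner_commute algebra_simps power2_eq_square)
  qed
  then have "trace_ip C M - k \<bullet> m \<le> 0"
    by (rule nonpos_if_le_quadratic_near_0[OF \<open>0 < e\<close>])
  then show ?thesis by simp
qed

lemma primal_optimal_dual_feasible:
  assumes "symmetric_mat C" and opt: "primal_optimal C Z k"
  shows "dual_feasible C k"
  unfolding dual_feasible_def psd_def
proof (intro conjI allI)
  show "symmetric_mat (Diag k - C)"
    using assms(1) by (simp add: symmetric_mat_iff Diag_def)
  fix x
  have feasible: "primal_feasible (Z + t *\<^sub>R outer_prod x x) (k + t *\<^sub>R (\<chi> i. x$i * x$i))"
    if "0 < t" for t
  proof -
    have "psd Z" and "\<forall>i. Z$i$i = k$i"
      using opt by (simp_all add: primal_optimal_def primal_feasible_def)
    moreover from \<open>psd Z\<close> that have "psd (Z + t *\<^sub>R outer_prod x x)"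
      by (simp add: psd_add psd_scaleR psd_outer_prod)
    ultimately show ?thesis by (simp add: primal_feasible_def outer_prod_def)
  qed
  have "x \<bullet> (C *v x) \<le> k \<bullet> (\<chi> i. x$i * x$i)"
    using primal_optimal_feasible_direction[OF opt zero_less_one feasible]
    by (simp add: trace_ip_def trace_mult_outer_prod)
  also have "\<dots> = x \<bullet> (Diag k *v x)"
    using trace_Diag_mult[of k "outer_prod x x"] trace_mult_outer_prod[of "Diag k" x x]
    by (simp add: outer_prod_def)
  finally show "0 \<le> x \<bullet> ((Diag k - C) *v x)"
    by (simp add: matrix_vector_mult_diff_rdistrib inner_diff_right)
qed

lemma primal_optimal_inner_le_trace_ip:
  assumes opt: "primal_optimal C Z k"
  shows "k \<bullet> k \<le> trace_ip C Z"
proof -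
  have "primal_feasible (Z + t *\<^sub>R (- Z)) (k + t *\<^sub>R (- k))" if "t \<le> 1" for t
  proof -
    have "primal_feasible Z k" using opt primal_optimal_def by blast
    moreover have "Z + t *\<^sub>R (- Z) = (1 - t) *\<^sub>R Z" and "k + t *\<^sub>R (- k) = (1 - t) *\<^sub>R k"
      by (simp_all add: algebra_simps)
    ultimately show ?thesis
      using that by (simp add: primal_feasible_def psd_scaleR)
  qed
  from primal_optimal_feasible_direction[OF opt zero_less_one this] show ?thesis
    by (simp add: trace_ip_def trace_matrix_mult_eq_sum sum_negf)
qed

lemma weak_duality:
  assumes "primal_feasible Z k" and "dual_feasible C w"
  shows "trace_ip C Z \<le> w \<bullet> k"
proof -
  have "(\<chi> i. Z$i$i) = k" using assms(1) by (simp add: primal_feasible_def vec_eq_iff)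
  moreover have "0 \<le> trace ((Diag w - C) ** Z)"
    using assms by (simp add: primal_feasible_def dual_feasible_def trace_mult_psd_nonneg)
  ultimately show ?thesis
    by (simp add: trace_diff_mult trace_Diag_mult trace_ip_def)
qed

theorem lemmaC2:
  fixes C Z :: "real^'n^'n" and k :: "real^'n"
  assumes "symmetric_mat C"
    and "primal_optimal C Z k"
  shows "dual_optimal C (\<chi> i. Z $ i $ i)"
proof -
  have "(\<chi> i. Z$i$i) = k"
    using assms(2) by (simp add: primal_optimal_def primal_feasible_def vec_eq_iff)
  moreover have "k \<bullet> k \<le> w \<bullet> w" if "dual_feasible C w" for w
  proof -
    have "k \<bullet> k \<le> w \<bullet> k"
      using primal_optimal_inner_le_trace_ip[OF assms(2)] weak_duality[OF _ that] assms(2)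
      by (meson order_trans primal_optimal_def)
    moreover have "0 \<le> (w - k) \<bullet> (w - k)" by simp
    ultimately show ?thesis by (simp add: inner_diff_left inner_diff_right inner_commute)
  qed
  ultimately show ?thesis
    using primal_optimal_dual_feasible[OF assms] by (simp add: dual_optimal_def)
qed

end
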